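(* For every real number $\nu>0$, the set $\mathbb{L}^{(\nu)}$ of $\nu$-Liouville numbers is uncountable.
   Context: A real number $\xi$ is a Liouville number if there exist a sequence of rational numbers $p_k/q_k$ ($p_k,q_k$ integers, $q_k>1$) and a sequence of positive reals $(\omega_k)_k$ with $\omega_k\to\infty$ such that $0<|\xi-p_k/q_k|<q_k^{-\omega_k}$ for all $k$. For a real number $\xi$, let $S(\xi)$ be the set of real numbers $\nu^*\ge 0$ for which there exist a sequence of rationals $p_k/q_k$ (integers $q_k>1$) and a sequence of positive reals $(\omega_k)_k$ such that $0<|\xi-p_k/q_k|<q_k^{-\omega_k}$ for all $k$ and $\omega_k/q_k^{\nu^*}\to\infty$ as $k\to\infty$. For $\nu\in[0,\infty]$, $\xi$ is called a $\nu$-Liouville number if $\xi$ is a Liouville number and $\sup S(\xi)=\nu$; the set of $\nu$-Liouville numbers is denoted $\mathbb{L}^{(\nu)}$. In particular, $\xi$ is an $\infty$-Liouville number iff $S(\xi)=[0,\infty)$. *)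

theory Defs
  imports "HOL-Analysis.Analysis" "HOL-Library.Extended_Real"
begin

definition approx_seq :: "real \<Rightarrow> (nat \<Rightarrow> int) \<Rightarrow> (nat \<Rightarrow> int) \<Rightarrow> (nat \<Rightarrow> real) \<Rightarrow> bool" where
  "approx_seq \<xi> p q \<omega> \<longleftrightarrow>
     (\<forall>k. q k > 1 \<and> \<omega> k > 0 \<and>
          0 < \<bar>\<xi> - real_of_int (p k) / real_of_int (q k)\<bar> \<and>
          \<bar>\<xi> - real_of_int (p k) / real_of_int (q k)\<bar> < real_of_int (q k) powr (- \<omega> k))"

definition liouville :: "real \<Rightarrow> bool" where
  "liouville \<xi> \<longleftrightarrow> (\<exists>p q \<omega>. approx_seq \<xi> p q \<omega> \<and> filterlim \<omega> at_top sequentially)"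

definition S_set :: "real \<Rightarrow> real set" where
  "S_set \<xi> = {\<nu>. \<nu> \<ge> 0 \<and> (\<exists>p q \<omega>. approx_seq \<xi> p q \<omega> \<and>
       filterlim (\<lambda>k. \<omega> k / real_of_int (q k) powr \<nu>) at_top sequentially)}"

definition nu_liouville :: "ereal \<Rightarrow> real set" where
  "nu_liouville \<nu> = {\<xi>. liouville \<xi> \<and> Sup (ereal ` S_set \<xi>) = \<nu>}"

end

theory Submission
  imports Defs "HOL-Real_Asymp.Real_Asymp"
begin

text \<open>
  For A \<subseteq> \<nat> let xi A = \<Sum>n. d n / 2 ^ a n with digits d n = 3 for n \<in> A and d n = 1
  otherwise, and exponents a 0 = 4, a (n+1) = a n * (\<lceil>2 powr (\<nu> * a n)\<rceil> + 2). The partial sums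
  p n / 2 ^ a n approximate xi A to within (2 ^ a n) powr (- \<omega>) with \<omega> \<approx> 2 powr (\<nu> * a n),
  i.e. q powr \<nu> for q = 2 ^ a n, so [0, \<nu>) \<subseteq> S (xi A). Conversely every approximation
  \<bar>xi A - p/q\<bar> < q powr (- \<omega>) has \<omega> < q powr \<nu> + 6: if p/q is a partial sum, its denominator is at
  least 2 ^ a n since the numerators are odd; otherwise p/q differs by at least 1 / (q * 2 ^ a n) from
  the partial sum with the least 2 ^ a n \<ge> q, while the tail is far smaller. Hence sup S (xi A) = \<nu>.
  Finally xi is injective, since the first digit where A and B differ contributes 2 / 2 ^ a n, more
  than the two tails together.
\<close>

lemma uncountable_UNIV_nat_set: "uncountable (UNIV :: nat set set)"
  unfolding uncountable_def using Cantors_theorem[of "UNIV :: nat set"] by auto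

lemma pow2_powr: "((2::real) ^ k) powr x = 2 powr (real k * x)"
  by (simp add: powr_realpow[symmetric] powr_powr)

lemma inverse_pow2_eq_powr: "1 / (2::real) ^ k = 2 powr (- real k)"
  by (simp add: powr_minus powr_realpow divide_inverse)

lemma powr_neg_less_imp_less:
  fixes x d e \<omega> :: real
  assumes "x > 1" "x powr (- e) \<le> d" "d < x powr (- \<omega>)"
  shows "\<omega> < e"
  using assms powr_less_cancel_iff[of x "- e" "- \<omega>"] by linarith

lemma denominator_ge_of_odd_numerator:
  fixes p q P :: int
  assumes "odd P" "q > 0" "real_of_int p / real_of_int q = real_of_int P / 2 ^ a"
  shows "2 ^ a \<le> q"
proof -
  have "real_of_int (p * 2 ^ a) = real_of_int (P * q)"
    using assms(2,3) by (simp add: field_simps)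
  hence "p * 2 ^ a = P * q" by (simp only: of_int_eq_iff)
  hence "(2::int) ^ a dvd P * q" by (metis dvd_triv_right)
  moreover have "coprime ((2::int) ^ a) P" using assms(1) by simp
  ultimately have "(2::int) ^ a dvd q" using coprime_dvd_mult_right_iff by blast
  thus ?thesis using assms(2) by (rule zdvd_imp_le)
qed

lemma distinct_fractions_dist_ge:
  fixes p q P Q :: int
  assumes "q > 0" "Q > 0" "real_of_int p / real_of_int q \<noteq> real_of_int P / real_of_int Q"
  shows "1 / (real_of_int q * real_of_int Q)
           \<le> \<bar>real_of_int p / real_of_int q - real_of_int P / real_of_int Q\<bar>"
proof -
  have eq: "real_of_int p / real_of_int q - real_of_int P / real_of_int Q
              = real_of_int (p * Q - P * q) / (real_of_int q * real_of_int Q)"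
    using assms(1,2) by (simp add: field_simps)
  have "p * Q - P * q \<noteq> 0"
  proof
    assume "p * Q - P * q = 0"
    hence "real_of_int p / real_of_int q - real_of_int P / real_of_int Q = 0" unfolding eq by simp
    thus False using assms(3) by simp
  qed
  hence "1 \<le> \<bar>real_of_int (p * Q - P * q)\<bar>" by linarith
  thus ?thesis unfolding eq using assms(1,2) by (simp add: abs_div divide_right_mono)
qed

lemma Sup_ereal_image_eq:
  fixes v :: real and S :: "real set"
  assumes "v > 0" "{0..<v} \<subseteq> S" "S \<subseteq> {..v}"
  shows "Sup (ereal ` S) = ereal v"
proof (rule antisym)
  show "Sup (ereal ` S) \<le> ereal v"
    by (rule Sup_least) (use assms(3) in auto)
  show "ereal v \<le> Sup (ereal ` S)"
  proof (rule dense_le)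
    fix y assume y: "y < ereal v"
    have zero: "ereal 0 \<le> Sup (ereal ` S)"
      by (rule Sup_upper) (use assms(1,2) in auto)
    show "y \<le> Sup (ereal ` S)"
    proof (cases y)
      case (real r)
      show ?thesis
      proof (cases "r < 0")
        case True thus ?thesis using zero real by (meson ereal_less_eq(3) less_imp_le order_trans)
      next
        case False
        hence "r \<in> S" using assms(2) y real by auto
        thus ?thesis unfolding real by (intro Sup_upper) auto
      qed
    qed (use y in auto)
  qed
qed

definition digit :: "nat set \<Rightarrow> nat \<Rightarrow> int" where
  "digit A n = (if n \<in> A then 3 else 1)"

context
  fixes v :: real
begin

definition growth_factor :: "nat \<Rightarrow> nat" where
  "growth_factor x = nat \<lceil>2 powr (v * real x)\<rceil> + 2"

fun expo :: "nat \<Rightarrow> nat" where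
  "expo 0 = 4"
| "expo (Suc n) = expo n * growth_factor (expo n)"

fun numer :: "nat set \<Rightarrow> nat \<Rightarrow> int" where
  "numer A 0 = digit A 0"
| "numer A (Suc n) = numer A n * 2 ^ (expo (Suc n) - expo n) + digit A (Suc n)"

definition summand :: "nat set \<Rightarrow> nat \<Rightarrow> real" where
  "summand A m = real_of_int (digit A m) / 2 ^ expo m"

definition xi :: "nat set \<Rightarrow> real" where
  "xi A = suminf (summand A)"

definition tail :: "nat set \<Rightarrow> nat \<Rightarrow> real" where
  "tail A n = (\<Sum>m. summand A (m + Suc n))"

text \<open>Chosen so that (2 ^ expo k) powr (- approx_exponent k) = 2 powr (3 - expo (Suc k)), which
  exceeds the tail bound 6 / 2 ^ expo (Suc k).\<close>
definition approx_exponent :: "nat \<Rightarrow> real" where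
  "approx_exponent k = (real (expo (Suc k)) - 3) / real (expo k)"

lemma growth_factor_bounds:
  "2 powr (v * real x) + 2 \<le> real (growth_factor x)"
  "real (growth_factor x) < 2 powr (v * real x) + 3"
proof -
  have "(0::real) < 2 powr (v * real x)" by simp
  hence "real (nat \<lceil>2 powr (v * real x)\<rceil>) = real_of_int \<lceil>2 powr (v * real x)\<rceil>" by simp
  thus "2 powr (v * real x) + 2 \<le> real (growth_factor x)"
       "real (growth_factor x) < 2 powr (v * real x) + 3"
    unfolding growth_factor_def by linarith+
qed

lemma growth_factor_ge_3: "growth_factor x \<ge> 3"
  using growth_factor_bounds(1)[of x] powr_gt_zero[of 2 "v * real x"] by linarith

lemma growth_factor_less_powr:
  assumes "v \<ge> 0" "(2::real) ^ k \<le> y"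
  shows "real (growth_factor k) < y powr v + 3"
proof -
  have "2 powr (v * real k) = ((2::real) ^ k) powr v" by (simp add: pow2_powr mult.commute)
  also have "\<dots> \<le> y powr v" by (rule powr_mono2) (use assms in auto)
  finally show ?thesis using growth_factor_bounds(2)[of k] by linarith
qed

lemma expo_ge_4: "expo n \<ge> 4"
proof (induction n)
  case (Suc n)
  have "expo n * 1 \<le> expo n * growth_factor (expo n)"
    using growth_factor_ge_3[of "expo n"] by (intro mult_le_mono2) simp
  hence "expo n \<le> expo (Suc n)" by simp
  thus ?case using Suc by linarith
qed simp

lemma expo_Suc_ge: "expo (Suc n) \<ge> 3 * expo n"
  using growth_factor_ge_3[of "expo n"] by simp

lemma expo_Suc_ge': "expo (Suc n) \<ge> 2 * expo n + 4"
  using expo_Suc_ge[of n] expo_ge_4[of n] by linarith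

lemma expo_add_ge: "expo (i + j) \<ge> expo i + j"
proof (induction j)
  case (Suc j) thus ?case using expo_Suc_ge'[of "i + j"] by simp
qed simp

lemma expo_ge: "expo n \<ge> n"
  using expo_add_ge[of 0 n] by simp

lemma filterlim_expo: "filterlim (\<lambda>k. real (expo k)) at_top sequentially"
  by (rule filterlim_at_top_mono[OF filterlim_real_sequentially]) (use expo_ge in auto)

lemma pow2_expo_Suc_le_powr:
  assumes "v \<ge> 0" "(2::real) ^ expo k \<le> y"
  shows "2 ^ expo (Suc k) \<le> y powr (y powr v + 3)"
proof -
  have "(1::real) \<le> 2 ^ expo k" by simp
  hence y1: "y \<ge> 1" using assms(2) by linarith
  have "(2::real) ^ expo (Suc k) = ((2::real) ^ expo k) ^ growth_factor (expo k)"
    by (simp add: power_mult)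
  also have "\<dots> \<le> y ^ growth_factor (expo k)" by (rule power_mono) (use assms in auto)
  also have "\<dots> = y powr real (growth_factor (expo k))" using y1 by (simp add: powr_realpow)
  also have "\<dots> \<le> y powr (y powr v + 3)"
    using growth_factor_less_powr[OF assms] y1 by (intro powr_mono) auto
  finally show ?thesis .
qed

lemma summand_bounds: "1 / 2 ^ expo m \<le> summand A m" "summand A m \<le> 3 / 2 ^ expo m"
  unfolding summand_def digit_def by (simp_all add: divide_right_mono)

lemma summand_pos: "0 < summand A m"
  unfolding summand_def digit_def by simp

lemma summand_le_geometric: "summand A (m + k) \<le> (3 / 2 ^ expo k) * (1/2) ^ m"
proof -
  have "(2::real) ^ (expo k + m) \<le> 2 ^ expo (k + m)"
    using expo_add_ge[of k m] by (intro power_increasing) auto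
  hence "3 / (2::real) ^ expo (k + m) \<le> 3 / 2 ^ (expo k + m)"
    by (intro divide_left_mono) auto
  also have "\<dots> = (3 / 2 ^ expo k) * (1/2) ^ m"
    by (simp add: power_add power_one_over)
  finally show ?thesis using summand_bounds(2)[of A "m + k"] by (simp add: add.commute)
qed

lemma summable_summand_shift: "summable (\<lambda>m. summand A (m + k))"
proof (rule summable_comparison_test')
  show "summable (\<lambda>m. (3 / 2 ^ expo k) * (1/2::real) ^ m)"
    by (intro summable_mult summable_geometric) simp
  show "norm (summand A (m + k)) \<le> (3 / 2 ^ expo k) * (1/2::real) ^ m" for m
    using summand_le_geometric[of A m k] summand_pos[of A "m + k"] by simp
qed

lemma numer_odd: "odd (numer A n)"
proof (induction n)
  case (Suc n)
  have "expo (Suc n) - expo n \<noteq> 0" using expo_Suc_ge[of n] expo_ge_4[of n] by simp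
  thus ?case using Suc by (simp add: digit_def)
qed (simp add: digit_def)

lemma partial_sum_eq: "(\<Sum>m\<le>n. summand A m) = real_of_int (numer A n) / 2 ^ expo n"
proof (induction n)
  case (Suc n)
  define e where "e = expo (Suc n) - expo n"
  have expo_Suc: "expo (Suc n) = expo n + e"
    unfolding e_def using expo_Suc_ge[of n] by (simp del: expo.simps)
  have "(\<Sum>m\<le>Suc n. summand A m) = real_of_int (numer A n) / 2 ^ expo n + summand A (Suc n)"
    using Suc by simp
  also have "\<dots> = real_of_int (numer A (Suc n)) / 2 ^ expo (Suc n)"
    unfolding summand_def expo_Suc by (simp del: expo.simps add: e_def[symmetric] power_add field_simps)
  finally show ?case .
qed (simp add: summand_def)

lemma xi_eq_sum_plus_tail: "xi A = (\<Sum>m\<le>n. summand A m) + tail A n"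
  using suminf_split_initial_segment[OF summable_summand_shift[of A 0], of "Suc n"]
  unfolding xi_def tail_def by (simp add: lessThan_Suc_atMost)

lemma xi_eq_partial_plus_tail: "xi A = real_of_int (numer A n) / 2 ^ expo n + tail A n"
  using xi_eq_sum_plus_tail partial_sum_eq by simp

lemma tail_bounds: "1 / 2 ^ expo (Suc n) \<le> tail A n" "tail A n \<le> 6 / 2 ^ expo (Suc n)"
proof -
  have "(\<Sum>m\<in>{0}. summand A (m + Suc n)) \<le> tail A n"
    unfolding tail_def
    by (rule sum_le_suminf[OF summable_summand_shift]) (auto intro: less_imp_le summand_pos)
  thus "1 / 2 ^ expo (Suc n) \<le> tail A n" using summand_bounds(1)[of "Suc n" A] by simp
  have "tail A n \<le> (\<Sum>m. (3 / 2 ^ expo (Suc n)) * (1/2::real) ^ m)"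
    unfolding tail_def
    by (rule suminf_le[OF summand_le_geometric summable_summand_shift])
       (intro summable_mult summable_geometric, simp)
  also have "\<dots> = 6 / 2 ^ expo (Suc n)"
    by (subst suminf_mult) (auto simp: suminf_geometric)
  finally show "tail A n \<le> 6 / 2 ^ expo (Suc n)" .
qed

lemma tail_pos: "0 < tail A n"
  by (rule less_le_trans[OF _ tail_bounds(1)]) simp

lemma exponent_bound_at_partial_sum:
  assumes "v \<ge> 0" "q > 1"
    and partial: "real_of_int p / real_of_int q = real_of_int (numer A m) / 2 ^ expo m"
    and approx: "\<bar>xi A - real_of_int p / real_of_int q\<bar> < real_of_int q powr (- \<omega>)"
  shows "\<omega> < real_of_int q powr v + 3"
proof (rule powr_neg_less_imp_less)
  let ?q = "real_of_int q"
  have "2 ^ expo m \<le> q" using denominator_ge_of_odd_numerator[OF numer_odd] assms(2) partial by simp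
  hence "(2::real) ^ expo m \<le> ?q" by (metis of_int_le_iff of_int_numeral of_int_power)
  hence "2 ^ expo (Suc m) \<le> ?q powr (?q powr v + 3)" by (rule pow2_expo_Suc_le_powr[OF assms(1)])
  hence "1 / ?q powr (?q powr v + 3) \<le> 1 / 2 ^ expo (Suc m)"
    using assms(2) by (intro divide_left_mono) auto
  hence "?q powr (- (?q powr v + 3)) \<le> 1 / 2 ^ expo (Suc m)"
    by (simp only: powr_minus_divide)
  thus "?q powr (- (?q powr v + 3)) \<le> tail A m" using tail_bounds(1) by (rule order_trans)
  show "tail A m < ?q powr (- \<omega>)"
    using approx xi_eq_partial_plus_tail[of A m] partial tail_pos[of A m] by simp
qed (use assms(2) in simp)

lemma dist_xi_ge_off_partial_sum:
  assumes "q > 1" "real_of_int q \<le> 2 ^ expo n"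
    and off: "real_of_int p / real_of_int q \<noteq> real_of_int (numer A n) / 2 ^ expo n"
  shows "1 / (2 * real_of_int q * 2 ^ expo n) \<le> \<bar>xi A - real_of_int p / real_of_int q\<bar>"
proof -
  define x where "x = real_of_int q"
  define Q where "Q = (2::real) ^ expo n"
  have xQ: "2 \<le> x" "x \<le> Q" using assms(1,2) unfolding x_def Q_def by simp_all
  have "(2::real) ^ (2 * expo n + 4) \<le> 2 ^ expo (Suc n)"
    by (rule power_increasing) (use expo_Suc_ge'[of n] in auto)
  hence "16 * (Q * Q) \<le> 2 ^ expo (Suc n)"
    unfolding Q_def by (simp del: expo.simps add: power_add power_even_eq power2_eq_square)
  moreover have "x * Q \<le> Q * Q" using xQ by (intro mult_right_mono) auto
  ultimately have "16 * (x * Q) \<le> 2 ^ expo (Suc n)" by linarith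
  hence tail_le: "6 / 2 ^ expo (Suc n) \<le> 6 / (16 * (x * Q))"
    using xQ by (intro divide_left_mono) auto
  define e where "e = 1 / (x * Q)"
  have "6 / (16 * (x * Q)) = 3 / 8 * e" unfolding e_def by simp
  hence "tail A n \<le> 3 / 8 * e" using tail_bounds(2)[of A n] tail_le by linarith
  moreover have "e \<le> \<bar>real_of_int p / x - real_of_int (numer A n) / Q\<bar>"
    using distinct_fractions_dist_ge[of q "2 ^ expo n" p "numer A n"] assms(1) off
    unfolding e_def x_def Q_def by simp
  moreover have "xi A = real_of_int (numer A n) / Q + tail A n"
    unfolding Q_def by (rule xi_eq_partial_plus_tail)
  ultimately have "e / 2 \<le> \<bar>xi A - real_of_int p / x\<bar>" using tail_pos[of A n] by linarith
  thus ?thesis unfolding e_def x_def Q_def by simp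
qed

lemma least_level_bound:
  assumes "v \<ge> 0" "x \<ge> 2" "x \<le> 2 ^ expo n" and below: "\<And>k. k < n \<Longrightarrow> 2 ^ expo k < x"
  shows "2 * x * 2 ^ expo n \<le> x powr (x powr v + 6)"
proof (cases n)
  case 0
  have "(2::real) ^ 5 \<le> x ^ 5" by (rule power_mono) (use assms(2) in auto)
  hence "2 * x * 2 ^ expo n \<le> x ^ 5 * x" unfolding 0 using assms(2) by simp
  also have "\<dots> = x powr 6" using assms(2) by (simp add: power_Suc2[symmetric])
  also have "\<dots> \<le> x powr (x powr v + 6)" using assms(2) by (intro powr_mono) auto
  finally show ?thesis .
next
  case (Suc k)
  have "2 * x \<le> x * x" using assms(2) by (intro mult_right_mono) auto
  also have "\<dots> \<le> x powr 3" using assms(2) by (simp add: power3_eq_cube)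
  finally have "2 * x \<le> x powr 3" .
  moreover have "2 ^ expo n \<le> x powr (x powr v + 3)"
    unfolding Suc using below[of k] Suc by (intro pow2_expo_Suc_le_powr[OF assms(1)]) auto
  ultimately have "2 * x * 2 ^ expo n \<le> x powr 3 * x powr (x powr v + 3)"
    by (intro mult_mono) auto
  also have "\<dots> = x powr (x powr v + 6)" by (simp add: powr_add[symmetric] add.commute)
  finally show ?thesis .
qed

lemma exponent_bound_off_partial_sums:
  assumes "v \<ge> 0" "q > 1"
    and off: "\<And>m. real_of_int p / real_of_int q \<noteq> real_of_int (numer A m) / 2 ^ expo m"
    and approx: "\<bar>xi A - real_of_int p / real_of_int q\<bar> < real_of_int q powr (- \<omega>)"
  shows "\<omega> < real_of_int q powr v + 6"
proof (rule powr_neg_less_imp_less)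
  let ?q = "real_of_int q"
  define n where "n = (LEAST n. ?q \<le> 2 ^ expo n)"
  have "nat q < 2 ^ nat q" by (rule less_exp)
  also have "(2::nat) ^ nat q \<le> 2 ^ expo (nat q)" by (rule power_increasing) (use expo_ge in auto)
  finally have "real (nat q) < real ((2::nat) ^ expo (nat q))" by linarith
  hence "?q \<le> 2 ^ expo (nat q)" using assms(2) by simp
  hence level: "?q \<le> 2 ^ expo n" unfolding n_def by (rule LeastI)
  have "2 ^ expo k < ?q" if "k < n" for k
    using not_less_Least[OF that[unfolded n_def]] by simp
  hence "2 * ?q * 2 ^ expo n \<le> ?q powr (?q powr v + 6)"
    using least_level_bound[OF assms(1) _ level] assms(2) by simp
  hence "1 / ?q powr (?q powr v + 6) \<le> 1 / (2 * ?q * 2 ^ expo n)"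
    using assms(2) by (intro divide_left_mono) auto
  also have "\<dots> \<le> \<bar>xi A - real_of_int p / ?q\<bar>"
    by (rule dist_xi_ge_off_partial_sum[OF assms(2) level off])
  finally show "?q powr (- (?q powr v + 6)) \<le> \<bar>xi A - real_of_int p / ?q\<bar>"
    by (simp only: powr_minus_divide)
  show "\<bar>xi A - real_of_int p / ?q\<bar> < ?q powr (- \<omega>)" by (rule approx)
qed (use assms(2) in simp)

lemma exponent_bound:
  assumes "v \<ge> 0" "q > 1"
    and "\<bar>xi A - real_of_int p / real_of_int q\<bar> < real_of_int q powr (- \<omega>)"
  shows "\<omega> < real_of_int q powr v + 6"
proof (cases "\<exists>m. real_of_int p / real_of_int q = real_of_int (numer A m) / 2 ^ expo m")
  case True
  then obtain m where "real_of_int p / real_of_int q = real_of_int (numer A m) / 2 ^ expo m" ..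
  thus ?thesis using exponent_bound_at_partial_sum[OF assms(1,2) _ assms(3)] by fastforce
qed (use exponent_bound_off_partial_sums[OF assms(1,2) _ assms(3)] in blast)

lemma S_set_xi_le:
  assumes "v \<ge> 0" "t \<in> S_set (xi A)"
  shows "t \<le> v"
proof (rule ccontr)
  assume "\<not> t \<le> v"
  hence "v < t" by simp
  from assms(2) obtain p q \<omega> where approx: "approx_seq (xi A) p q \<omega>"
    and lim: "filterlim (\<lambda>k. \<omega> k / real_of_int (q k) powr t) at_top sequentially"
    unfolding S_set_def by blast
  have "\<omega> k / real_of_int (q k) powr t < 7" for k
  proof -
    have q1: "q k > 1"
      and "\<bar>xi A - real_of_int (p k) / real_of_int (q k)\<bar> < real_of_int (q k) powr (- \<omega> k)"
      using approx unfolding approx_seq_def by auto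
    hence "\<omega> k < real_of_int (q k) powr v + 6" by (rule exponent_bound[OF assms(1)])
    moreover have "real_of_int (q k) powr v \<le> real_of_int (q k) powr t"
      using \<open>v < t\<close> q1 by (intro powr_mono) auto
    moreover have one_le: "1 \<le> real_of_int (q k) powr t"
      using q1 \<open>v < t\<close> assms(1) by (intro ge_one_powr_ge_zero) auto
    ultimately have "\<omega> k < 7 * real_of_int (q k) powr t" by linarith
    thus ?thesis using one_le by (subst pos_divide_less_eq) auto
  qed
  moreover have "eventually (\<lambda>k. 7 < \<omega> k / real_of_int (q k) powr t) sequentially"
    using lim by (simp add: filterlim_at_top_dense)
  then obtain k where "7 < \<omega> k / real_of_int (q k) powr t"
    by (auto simp: eventually_sequentially)
  ultimately show False by (meson less_asym)
qed

lemma approx_exponent_ge: "approx_exponent k \<ge> 2 powr (v * real (expo k))"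
proof -
  have a: "real (expo k) \<ge> 4" using expo_ge_4[of k] by linarith
  have "approx_exponent k = real (growth_factor (expo k)) - 3 / real (expo k)"
    unfolding approx_exponent_def using a by (simp add: divide_simps)
  moreover have "3 / real (expo k) \<le> 1" using a by simp
  ultimately show ?thesis using growth_factor_bounds(1)[of "expo k"] by linarith
qed

lemma approx_seq_xi: "approx_seq (xi A) (numer A) (\<lambda>k. 2 ^ expo k) approx_exponent"
  unfolding approx_seq_def
proof (intro allI conjI)
  fix k
  have "(2::int) ^ 1 < 2 ^ expo k" by (rule power_strict_increasing) (use expo_ge_4[of k] in auto)
  thus "(1::int) < 2 ^ expo k" by simp
  show "0 < approx_exponent k" by (rule less_le_trans[OF _ approx_exponent_ge]) simp
  have dist: "xi A - real_of_int (numer A k) / real_of_int (2 ^ expo k) = tail A k"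
    using xi_eq_partial_plus_tail[of A k] by simp
  show "0 < \<bar>xi A - real_of_int (numer A k) / real_of_int (2 ^ expo k)\<bar>"
    unfolding dist using tail_pos[of A k] by simp
  have "(6::real) / 2 ^ expo (Suc k) < 2 ^ 3 / 2 ^ expo (Suc k)"
    by (intro divide_strict_right_mono) auto
  hence "tail A k < 2 ^ 3 / 2 ^ expo (Suc k)" using tail_bounds(2)[of A k] by linarith
  also have "\<dots> = 2 powr 3 * 2 powr (- real (expo (Suc k)))"
    by (simp del: expo.simps add: inverse_pow2_eq_powr[symmetric])
  also have "\<dots> = 2 powr (3 + - real (expo (Suc k)))" by (rule powr_add[symmetric])
  also have "\<dots> = 2 powr (- (real (expo (Suc k)) - 3))" by (simp del: expo.simps)
  also have "\<dots> = ((2::real) ^ expo k) powr (- approx_exponent k)"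
    unfolding pow2_powr approx_exponent_def using expo_ge_4[of k] by simp
  finally show "\<bar>xi A - real_of_int (numer A k) / real_of_int (2 ^ expo k)\<bar>
      < real_of_int (2 ^ expo k) powr (- approx_exponent k)"
    unfolding dist using tail_pos[of A k] by simp
qed

lemma filterlim_approx_exponent_ratio:
  assumes "0 \<le> t" "t < v"
  shows "filterlim (\<lambda>k. approx_exponent k / real_of_int (2 ^ expo k) powr t) at_top sequentially"
proof (rule filterlim_at_top_mono)
  have "filterlim (\<lambda>y::real. 2 powr ((v - t) * y)) at_top at_top"
    using assms by real_asymp
  thus "filterlim (\<lambda>k. 2 powr ((v - t) * real (expo k))) at_top sequentially"
    by (rule filterlim_compose[OF _ filterlim_expo])
  show "\<forall>\<^sub>F k in sequentially.
          2 powr ((v - t) * real (expo k)) \<le> approx_exponent k / real_of_int (2 ^ expo k) powr t"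
  proof (intro always_eventually allI)
    fix k
    have "2 powr ((v - t) * real (expo k)) * 2 powr (real (expo k) * t) = 2 powr (v * real (expo k))"
      by (simp add: powr_add[symmetric] algebra_simps)
    thus "2 powr ((v - t) * real (expo k)) \<le> approx_exponent k / real_of_int (2 ^ expo k) powr t"
      using approx_exponent_ge[of k] by (simp add: pow2_powr divide_simps)
  qed
qed

lemma S_set_xi_ge:
  assumes "0 \<le> t" "t < v"
  shows "t \<in> S_set (xi A)"
  unfolding S_set_def using assms approx_seq_xi filterlim_approx_exponent_ratio[OF assms] by blast

lemma liouville_xi:
  assumes "v > 0"
  shows "liouville (xi A)"
  unfolding liouville_def
  using approx_seq_xi filterlim_approx_exponent_ratio[of 0] assms by auto

lemma Sup_S_set_xi:
  assumes "v > 0"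
  shows "Sup (ereal ` S_set (xi A)) = ereal v"
  by (rule Sup_ereal_image_eq) (use assms S_set_xi_ge S_set_xi_le in auto)

lemma inj_xi: "inj xi"
proof (rule injI, rule ccontr)
  fix A B assume eq: "xi A = xi B" and "A \<noteq> B"
  hence "\<exists>n. (n \<in> A) \<noteq> (n \<in> B)" by blast
  define n where "n = (LEAST n. (n \<in> A) \<noteq> (n \<in> B))"
  have differ: "(n \<in> A) \<noteq> (n \<in> B)" unfolding n_def by (rule LeastI_ex) fact
  have "summand A m = summand B m" if "m < n" for m
    using not_less_Least[OF that[unfolded n_def]] unfolding summand_def digit_def by simp
  hence "(\<Sum>m<n. summand A m) = (\<Sum>m<n. summand B m)" by (intro sum.cong) auto
  hence "0 = (summand A n - summand B n) + (tail A n - tail B n)"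
    using eq xi_eq_sum_plus_tail[of A n] xi_eq_sum_plus_tail[of B n]
    by (simp add: lessThan_Suc_atMost[symmetric])
  moreover have "\<bar>summand A n - summand B n\<bar> = 2 / 2 ^ expo n"
    unfolding summand_def digit_def using differ by (auto simp: divide_simps)
  moreover have "\<bar>tail A n - tail B n\<bar> \<le> 5 / 2 ^ expo (Suc n)"
  proof -
    have "6 / 2 ^ expo (Suc n) - 1 / 2 ^ expo (Suc n) = 5 / (2::real) ^ expo (Suc n)"
      by (simp only: diff_divide_distrib[symmetric]) simp
    thus ?thesis
      using tail_bounds(1)[of n A] tail_bounds(1)[of n B] tail_bounds(2)[of A n] tail_bounds(2)[of B n]
      by linarith
  qed
  moreover have "5 / 2 ^ expo (Suc n) < 2 / (2::real) ^ expo n"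
  proof -
    have "(2::real) ^ (expo n + 4) \<le> 2 ^ expo (Suc n)"
      by (rule power_increasing) (use expo_Suc_ge'[of n] in auto)
    hence "16 * 2 ^ expo n \<le> (2::real) ^ expo (Suc n)" by (simp del: expo.simps add: power_add)
    hence "5 / 2 ^ expo (Suc n) \<le> 5 / (16 * (2::real) ^ expo n)"
      by (intro divide_left_mono) auto
    also have "\<dots> < 2 / 2 ^ expo n" by (simp add: divide_simps)
    finally show ?thesis .
  qed
  ultimately show False by linarith
qed

end

theorem theorem1:
  fixes \<nu> :: real
  assumes "\<nu> > 0"
  shows "uncountable (nu_liouville (ereal \<nu>))"
proof
  assume "countable (nu_liouville (ereal \<nu>))"
  moreover have "range (xi \<nu>) \<subseteq> nu_liouville (ereal \<nu>)"
    unfolding nu_liouville_def using liouville_xi[OF assms] Sup_S_set_xi[OF assms] by auto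
  ultimately have "countable (range (xi \<nu>))" by (rule countable_subset[rotated])
  hence "countable (UNIV :: nat set set)" using countable_image_inj_on inj_xi by blast
  thus False using uncountable_UNIV_nat_set by blast
qed

end
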